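(* Let $Z$ be a real random variable with an $s$-concave distribution for some $s\in(-1/3,0]$, and let $M(Z)=\operatorname{ess\,sup}_{z\in\mathbb{R}}f_Z(z)$ where $f_Z$ is its Lebesgue density. Then $$\frac1{12}\le\mathrm{Var}(Z)M^2(Z)\le\frac{4(1+s)^3}{(1+3s)(1+2s)^2}.$$ The lower bound holds for every real random variable $Z$ with a Lebesgue density and finite variance (not necessarily $s$-concave).
   Context: For $s\in[-\infty,\infty]$, a function $f:\mathbb{R}\to[0,\infty]$ is $s$-concave if for all $x,y$ and $\theta\in[0,1]$, $f(\theta x+(1-\theta)y)\ge(\theta f^s(x)+(1-\theta)f^s(y))^{1/s}$, with the right-hand side interpreted as $f(x)^\theta f(y)^{1-\theta}$ for $s=0$ and $f(x)\wedge f(y)$ for $s=-\infty$. A real random variable has an $s$-concave distribution if it has an $s$-concave density with respect to Lebesgue measure on the affine hull of its support. *)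

theory Defs
  imports "HOL-Probability.Probability"
begin

text \<open>The s-mean of two nonnegative reals with weight theta in (0,1), with the
  standard conventions: for s = 0 it is the geometric mean; for s < 0 it is 0
  as soon as one of the arguments is 0 (since 0 powr s = infinity there).\<close>
definition s_mean :: "real \<Rightarrow> real \<Rightarrow> real \<Rightarrow> real \<Rightarrow> real" where
  "s_mean s \<theta> a b =
     (if s = 0 then a powr \<theta> * b powr (1 - \<theta>)
      else if s < 0 \<and> (a = 0 \<or> b = 0) then 0
      else (\<theta> * a powr s + (1 - \<theta>) * b powr s) powr (1 / s))"

text \<open>s-concavity of a nonnegative function on the real line (real parameter s).
  The endpoint cases theta = 0, 1 are trivial and omitted.\<close>
definition s_concave :: "real \<Rightarrow> (real \<Rightarrow> real) \<Rightarrow> bool" where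
  "s_concave s f \<longleftrightarrow> (\<forall>x. f x \<ge> 0) \<and>
     (\<forall>x y \<theta>. 0 < \<theta> \<and> \<theta> < 1 \<longrightarrow> f (\<theta> * x + (1 - \<theta>) * y) \<ge> s_mean s \<theta> (f x) (f y))"

end

(*
  Lower bound: a density bounded by m has, about any point, at least the second moment of the
  uniform density on an interval of length 1/m, namely 1/(12 m^2).

  Upper bound: take s < 0 (a log-concave density is s-concave for every s < 0). The superlevel
  sets {f > y} are intervals whose lengths L(y) satisfy the Brunn-Minkowski inequality
  L((theta y1^s + (1 - theta) y2^s)^(1/s)) >= theta L(y1) + (1 - theta) L(y2); since s > -1 this
  forces M = ess sup f to be finite. The intervals are nested, so they share a point c, and the
  layer-cake formula gives  int f(x) (x - c)^2 dx <= int_0^M L(y)^3 / 3 dy.  Brunn-Minkowski also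
  shows that once L meets the extremal profile psi(y) = kappa (y^s - M^s) it stays above it.
  As int_0^M L = 1 = int_0^M psi, this single crossing yields
  int_0^M L^3 <= int_0^M psi^3 = 6 (1+s)^2 / ((1+2s)(1+3s) M^2), hence
  Var(Z) M^2 <= 2 (1+s)^2 / ((1+2s)(1+3s)), which is at most the stated constant because
  1 + 2s <= 2 (1 + s).
*)

theory Submission
  imports Defs
begin

section \<open>Elementary integrals and a single-crossing inequality\<close>

lemma has_integral_powr_Icc:
  fixes r lo hi :: real
  assumes "0 < lo" "lo \<le> hi" "r \<noteq> -1"
  shows "((\<lambda>y. y powr r) has_integral ((hi powr (r + 1) - lo powr (r + 1)) / (r + 1))) {lo..hi}"
proof -
  have "((\<lambda>y. y powr r) has_integral ((\<lambda>y. y powr (r + 1) / (r + 1)) hi - (\<lambda>y. y powr (r + 1) / (r + 1)) lo)) {lo..hi}"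
  proof (rule fundamental_theorem_of_calculus)
    fix x assume "x \<in> {lo..hi}"
    then have "((\<lambda>y. y powr (r + 1) / (r + 1)) has_real_derivative ((r + 1) * x powr r / (r + 1))) (at x within {lo..hi})"
      using assms by (auto intro!: derivative_eq_intros)
    then show "((\<lambda>y. y powr (r + 1) / (r + 1)) has_vector_derivative x powr r) (at x within {lo..hi})"
      using assms by (simp add: has_real_derivative_iff_has_vector_derivative)
  qed (use assms in simp)
  then show ?thesis by (simp add: diff_divide_distrib)
qed

lemma nn_integral_Icc_square_dist:
  fixes lo hi c :: real
  assumes "lo \<le> c" "c \<le> hi"
  shows "(\<integral>\<^sup>+x. indicator {lo..hi} x * ennreal ((x - c)^2) \<partial>lborel) = ennreal (((hi - c)^3 + (c - lo)^3) / 3)"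
proof -
  have "((\<lambda>x. (x - c)^2) has_integral ((\<lambda>x. (x - c)^3 / 3) hi - (\<lambda>x. (x - c)^3 / 3) lo)) {lo..hi}"
  proof (rule fundamental_theorem_of_calculus)
    fix x assume "x \<in> {lo..hi}"
    have "((\<lambda>x. (x - c)^3 / 3) has_real_derivative (x - c)^2) (at x within {lo..hi})"
      by (auto intro!: derivative_eq_intros simp: power2_eq_square)
    then show "((\<lambda>x. (x - c)^3 / 3) has_vector_derivative (x - c)^2) (at x within {lo..hi})"
      by (simp add: has_real_derivative_iff_has_vector_derivative)
  qed (use assms in simp)
  moreover have "(lo - c)^3 = - ((c - lo)^3)"
    by algebra
  then have "(\<lambda>x. (x - c)^3 / 3) hi - (\<lambda>x. (x - c)^3 / 3) lo = ((hi - c)^3 + (c - lo)^3) / 3"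
    by (simp add: add_divide_distrib)
  ultimately have "((\<lambda>x. (x - c)^2) has_integral (((hi - c)^3 + (c - lo)^3) / 3)) {lo..hi}"
    by simp
  from nn_integral_has_integral_lebesgue'[OF _ this] show ?thesis
    by (simp add: mult.commute)
qed

text \<open>Since \<open>3 c\<^sup>2\<close> is the slope of \<open>x\<^sup>3\<close> at \<open>c\<close>, the secant slopes of
  \<open>x\<^sup>3\<close> are below it on \<open>[0, c]\<close> and above it on \<open>[c, \<infinity>)\<close>.\<close>

lemma cube_secant_slope_ineq:
  fixes c l p :: real
  assumes "0 \<le> c" and "(0 \<le> p \<and> p \<le> l \<and> l \<le> c) \<or> (c \<le> l \<and> l < p)"
  shows "l^3 + 3 * c^2 * p \<le> p^3 + 3 * c^2 * l"
proof -
  have "p^3 + 3 * c^2 * l - (l^3 + 3 * c^2 * p) = (p - l) * (l^2 + l * p + p^2 - 3 * c^2)"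
    by algebra
  moreover have "0 \<le> (p - l) * (l^2 + l * p + p^2 - 3 * c^2)"
    using assms(2)
  proof
    assume h: "0 \<le> p \<and> p \<le> l \<and> l \<le> c"
    then have "l^2 \<le> c^2" "l * p \<le> c * c" "p^2 \<le> c^2"
      by (auto intro!: power_mono mult_mono)
    then show ?thesis using h by (intro mult_nonpos_nonpos) (auto simp: power2_eq_square)
  next
    assume h: "c \<le> l \<and> l < p"
    then have "c^2 \<le> l^2" "c * c \<le> l * p" "c^2 \<le> p^2"
      using assms(1) by (auto intro!: power_mono mult_mono)
    then show ?thesis using h by (intro mult_nonneg_nonneg) (auto simp: power2_eq_square)
  qed
  ultimately show ?thesis by simp
qed

text \<open>Integrating \<open>L\<^sup>3 - P\<^sup>3 \<le> 3 c\<^sup>2 (L - P)\<close> and using \<open>\<integral> L = \<integral> P\<close>.\<close>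

lemma nn_integral_cube_le_of_separating_level:
  fixes L P :: "'a \<Rightarrow> real"
  assumes [measurable]: "L \<in> borel_measurable N" "P \<in> borel_measurable N" "S \<in> sets N"
    and mass: "(\<integral>\<^sup>+y. indicator S y * ennreal (L y) \<partial>N) = (\<integral>\<^sup>+y. indicator S y * ennreal (P y) \<partial>N)"
    and finite: "(\<integral>\<^sup>+y. indicator S y * ennreal (P y) \<partial>N) \<noteq> \<infinity>"
    and "0 \<le> c"
    and separating: "\<And>y. y \<in> S \<Longrightarrow> (0 \<le> P y \<and> P y \<le> L y \<and> L y \<le> c) \<or> (c \<le> L y \<and> L y < P y)"
  shows "(\<integral>\<^sup>+y. indicator S y * ennreal (L y ^ 3) \<partial>N) \<le> (\<integral>\<^sup>+y. indicator S y * ennreal (P y ^ 3) \<partial>N)"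
proof -
  define k where "k = ennreal (3 * c^2)"
  define mass_P where "mass_P = (\<integral>\<^sup>+y. indicator S y * ennreal (P y) \<partial>N)"
  have "(\<integral>\<^sup>+y. indicator S y * ennreal (L y ^ 3) \<partial>N) + k * mass_P
      = (\<integral>\<^sup>+y. indicator S y * ennreal (L y ^ 3) + k * (indicator S y * ennreal (P y)) \<partial>N)"
    by (simp add: nn_integral_add nn_integral_cmult mass_P_def)
  also have "\<dots> \<le> (\<integral>\<^sup>+y. indicator S y * ennreal (P y ^ 3) + k * (indicator S y * ennreal (L y)) \<partial>N)"
  proof (intro nn_integral_mono)
    fix y
    show "indicator S y * ennreal (L y ^ 3) + k * (indicator S y * ennreal (P y))
        \<le> indicator S y * ennreal (P y ^ 3) + k * (indicator S y * ennreal (L y))"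
    proof (cases "y \<in> S")
      case True
      then have "L y ^ 3 + 3 * c^2 * P y \<le> P y ^ 3 + 3 * c^2 * L y"
        using separating \<open>0 \<le> c\<close> by (intro cube_secant_slope_ineq) auto
      moreover have "0 \<le> L y" "0 \<le> P y"
        using separating[OF True] \<open>0 \<le> c\<close> by auto
      ultimately show ?thesis
        using True by (simp add: k_def ennreal_plus[symmetric] ennreal_mult[symmetric] del: ennreal_plus)
    qed simp
  qed
  also have "\<dots> = (\<integral>\<^sup>+y. indicator S y * ennreal (P y ^ 3) \<partial>N) + k * mass_P"
    by (simp add: nn_integral_add nn_integral_cmult mass mass_P_def)
  finally have "k * mass_P + (\<integral>\<^sup>+y. indicator S y * ennreal (L y ^ 3) \<partial>N)
      \<le> k * mass_P + (\<integral>\<^sup>+y. indicator S y * ennreal (P y ^ 3) \<partial>N)"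
    by (simp only: add.commute)
  moreover have "k * mass_P \<noteq> \<infinity>"
    using finite by (simp add: k_def mass_P_def ennreal_mult_eq_top_iff)
  ultimately show ?thesis
    by (simp add: ennreal_add_left_cancel_le)
qed

lemma AE_eq_if_le_nn_integral_eq:
  fixes L P :: "'a \<Rightarrow> real"
  assumes [measurable]: "L \<in> borel_measurable N" "P \<in> borel_measurable N" "S \<in> sets N"
    and mass: "(\<integral>\<^sup>+y. indicator S y * ennreal (L y) \<partial>N) = (\<integral>\<^sup>+y. indicator S y * ennreal (P y) \<partial>N)"
    and finite: "(\<integral>\<^sup>+y. indicator S y * ennreal (P y) \<partial>N) \<noteq> \<infinity>"
    and le: "\<And>y. y \<in> S \<Longrightarrow> 0 \<le> P y \<and> P y \<le> L y"
  shows "AE y in N. y \<in> S \<longrightarrow> L y = P y"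
proof -
  have "(\<integral>\<^sup>+y. indicator S y * ennreal (P y) \<partial>N) + (\<integral>\<^sup>+y. indicator S y * ennreal (L y - P y) \<partial>N)
      = (\<integral>\<^sup>+y. indicator S y * ennreal (P y) + indicator S y * ennreal (L y - P y) \<partial>N)"
    by (simp add: nn_integral_add)
  also have "\<dots> = (\<integral>\<^sup>+y. indicator S y * ennreal (P y) \<partial>N) + 0"
    unfolding mass[symmetric] using le
    by (auto intro!: nn_integral_cong simp: indicator_def ennreal_plus[symmetric] simp del: ennreal_plus)
  finally have "(\<integral>\<^sup>+y. indicator S y * ennreal (L y - P y) \<partial>N) = 0"
    using finite by (simp only: ennreal_add_left_cancel) simp
  then have "AE y in N. indicator S y * ennreal (L y - P y) = 0"
    by (subst (asm) nn_integral_0_iff_AE) auto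
  then show ?thesis
    by eventually_elim (use le in \<open>fastforce simp: indicator_def ennreal_eq_0_iff intro: antisym\<close>)
qed

text \<open>The separating level is the infimum of \<open>L\<close> over the set where \<open>L < P\<close>.\<close>

lemma nn_integral_cube_le_single_crossing:
  fixes L P :: "'a \<Rightarrow> real"
  assumes [measurable]: "L \<in> borel_measurable N" "P \<in> borel_measurable N" "S \<in> sets N"
    and nonneg: "\<And>y. y \<in> S \<Longrightarrow> 0 \<le> L y" "\<And>y. y \<in> S \<Longrightarrow> 0 \<le> P y"
    and mass: "(\<integral>\<^sup>+y. indicator S y * ennreal (L y) \<partial>N) = (\<integral>\<^sup>+y. indicator S y * ennreal (P y) \<partial>N)"
    and finite: "(\<integral>\<^sup>+y. indicator S y * ennreal (P y) \<partial>N) \<noteq> \<infinity>"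
    and crossing: "\<And>y y'. y \<in> S \<Longrightarrow> y' \<in> S \<Longrightarrow> P y \<le> L y \<Longrightarrow> L y' < P y' \<Longrightarrow> L y \<le> L y'"
  shows "(\<integral>\<^sup>+y. indicator S y * ennreal (L y ^ 3) \<partial>N) \<le> (\<integral>\<^sup>+y. indicator S y * ennreal (P y ^ 3) \<partial>N)"
proof (cases "\<exists>y\<in>S. L y < P y")
  case True
  define T where "T = {y \<in> S. L y < P y}"
  define c where "c = Inf (L ` T)"
  have T: "T \<noteq> {}" "bdd_below (L ` T)"
    using True nonneg(1) by (auto simp: T_def intro: bdd_belowI[where m = 0])
  have "0 \<le> c"
    unfolding c_def using T nonneg(1) by (intro cInf_greatest) (auto simp: T_def)
  have below: "c \<le> L y" if "y \<in> T" for y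
    unfolding c_def using that T by (intro cInf_lower) auto
  have above: "L y \<le> c" if "y \<in> S" "P y \<le> L y" for y
    unfolding c_def using T that crossing by (intro cInf_greatest) (auto simp: T_def)
  have "(0 \<le> P y \<and> P y \<le> L y \<and> L y \<le> c) \<or> (c \<le> L y \<and> L y < P y)" if "y \<in> S" for y
    using that nonneg(2)[OF that] below above by (cases "P y \<le> L y") (auto simp: T_def)
  then show ?thesis
    using nn_integral_cube_le_of_separating_level[OF assms(1-3) mass finite \<open>0 \<le> c\<close>] by blast
next
  case False
  then have "AE y in N. y \<in> S \<longrightarrow> L y = P y"
    using nonneg(2) by (intro AE_eq_if_le_nn_integral_eq[OF _ _ _ mass finite]) (auto simp: not_less)
  then show ?thesis
    by (intro eq_refl nn_integral_cong_AE) (auto elim!: eventually_mono simp: indicator_def)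
qed

section \<open>The lower bound\<close>

lemma uniform_second_moment_pointwise:
  fixes a m c x y :: real
  assumes "0 < a" "0 \<le> y" "y \<le> m"
  defines "J \<equiv> {c - a..c + a}"
  shows "a^2 * y + m * (indicator J x * (x - c)^2) \<le> y * (x - c)^2 + m * a^2 * indicator J x"
proof (cases "x \<in> J")
  case True
  then have "(x - c)^2 \<le> a^2"
    by (auto simp: J_def intro!: power2_le_iff_abs_le[THEN iffD2])
  then have "0 \<le> (m - y) * (a^2 - (x - c)^2)"
    using assms by simp
  then show ?thesis
    using True by (simp add: algebra_simps)
next
  case False
  then have "a^2 \<le> (x - c)^2"
    using \<open>0 < a\<close> by (auto simp: J_def intro!: abs_le_square_iff[THEN iffD1])
  then show ?thesis
    using False \<open>0 \<le> y\<close> by (simp add: mult.commute mult_left_mono)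
qed

text \<open>Integrating the pointwise bound with \<open>a = 1/(2m)\<close>: the uniform density on an interval of
  length \<open>1/m\<close> minimises the second moment.\<close>

lemma second_moment_ge_of_density_le:
  fixes f :: "real \<Rightarrow> real"
  assumes f_nonneg: "\<And>x. 0 \<le> f x" and [measurable]: "f \<in> borel_measurable borel"
    and f_int: "(\<integral>\<^sup>+x. ennreal (f x) \<partial>lborel) = 1"
    and moment: "(\<integral>\<^sup>+x. ennreal (f x * (x - c)^2) \<partial>lborel) = ennreal V" and "0 \<le> V"
    and "0 < m" and f_le: "AE x in lborel. f x \<le> m"
  shows "1/12 \<le> V * m^2"
proof -
  define a where "a = 1 / (2 * m)"
  have "0 < a" using \<open>0 < m\<close> by (simp add: a_def)
  let ?J = "{c - a..c + a}"
  have square_J: "(\<integral>\<^sup>+x. ennreal (indicator ?J x) * ennreal ((x - c)^2) \<partial>lborel) = ennreal (2 * a^3 / 3)"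
    using nn_integral_Icc_square_dist[of "c - a" c "c + a"] \<open>0 < a\<close> by (simp add: ennreal_indicator)
  have moment': "(\<integral>\<^sup>+x. ennreal (f x) * ennreal ((x - c)^2) \<partial>lborel) = ennreal V"
    using moment f_nonneg by (simp add: ennreal_mult)
  have "ennreal (a^2) + ennreal m * ennreal (2 * a^3 / 3)
      = (\<integral>\<^sup>+x. ennreal (a^2 * f x + m * (indicator ?J x * (x - c)^2)) \<partial>lborel)"
    using f_nonneg \<open>0 < m\<close> \<open>0 < a\<close>
    by (simp add: nn_integral_add ennreal_mult nn_integral_cmult f_int square_J ennreal_plus[symmetric])
  also have "\<dots> \<le> (\<integral>\<^sup>+x. ennreal (f x * (x - c)^2 + m * a^2 * indicator ?J x) \<partial>lborel)"
    using f_le by (intro nn_integral_mono_AE) (auto elim!: eventually_mono intro!: ennreal_leI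
      uniform_second_moment_pointwise[OF \<open>0 < a\<close> f_nonneg])
  also have "\<dots> = ennreal V + ennreal (m * a^2) * ennreal (2 * a)"
    using f_nonneg \<open>0 < m\<close> \<open>0 < a\<close>
    by (simp add: nn_integral_add ennreal_mult nn_integral_cmult moment' ennreal_plus[symmetric] ennreal_indicator)
  finally have "a^2 + m * (2 * a^3 / 3) \<le> V + m * a^2 * (2 * a)"
    using \<open>0 < m\<close> \<open>0 < a\<close> \<open>0 \<le> V\<close>
    by (simp add: ennreal_mult[symmetric] ennreal_plus[symmetric] del: ennreal_plus)
  then show ?thesis
    using \<open>0 < m\<close> unfolding a_def by (simp add: field_simps power2_eq_square power3_eq_cube)
qed

lemma esssup_density_pos:
  fixes f :: "real \<Rightarrow> real"
  assumes f_nonneg: "\<And>x. 0 \<le> f x" and f_int: "(\<integral>\<^sup>+x. ennreal (f x) \<partial>lborel) = 1"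
  shows "0 < esssup lborel (\<lambda>x. ereal (f x))"
proof (rule ccontr)
  assume "\<not> 0 < esssup lborel (\<lambda>x. ereal (f x))"
  then have le0: "esssup lborel (\<lambda>x. ereal (f x)) \<le> 0"
    by (simp add: not_less)
  from esssup_AE[of "\<lambda>x. ereal (f x)" lborel] have "AE x in lborel. f x = 0"
  proof eventually_elim
    case (elim x)
    then have "ereal (f x) \<le> 0" using le0 by (rule order.trans)
    then show "f x = 0" using f_nonneg[of x] by simp
  qed
  then have "(\<integral>\<^sup>+x. ennreal (f x) \<partial>lborel) = 0"
    by (subst nn_integral_cong_AE[where v = "\<lambda>x. 0"]) (auto elim!: eventually_mono)
  with f_int show False by simp
qed

lemma square_dist_moment_pos:
  fixes f :: "real \<Rightarrow> real"
  assumes f_nonneg: "\<And>x. 0 \<le> f x" and [measurable]: "f \<in> borel_measurable borel"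
    and f_int: "(\<integral>\<^sup>+x. ennreal (f x) \<partial>lborel) = 1"
  shows "(\<integral>\<^sup>+x. ennreal (f x * (x - c)^2) \<partial>lborel) \<noteq> 0"
proof
  assume "(\<integral>\<^sup>+x. ennreal (f x * (x - c)^2) \<partial>lborel) = 0"
  then have "AE x in lborel. ennreal (f x * (x - c)^2) = 0"
    by (simp add: nn_integral_0_iff_AE)
  with AE_lborel_singleton[of c] have "AE x in lborel. f x = 0"
  proof eventually_elim
    case (elim x)
    then have "f x * (x - c)^2 \<le> 0" "0 < (x - c)^2"
      by (auto simp: ennreal_eq_0_iff)
    then show "f x = 0"
      using f_nonneg[of x] by (metis antisym mult_pos_pos not_le order_le_less)
  qed
  then have "(\<integral>\<^sup>+x. ennreal (f x) \<partial>lborel) = 0"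
    by (subst nn_integral_cong_AE[where v = "\<lambda>x. 0"]) (auto elim!: eventually_mono)
  with f_int show False by simp
qed

lemma second_moment_esssup_lower_bound:
  fixes f :: "real \<Rightarrow> real"
  assumes f_nonneg: "\<And>x. 0 \<le> f x" and [measurable]: "f \<in> borel_measurable borel"
    and f_int: "(\<integral>\<^sup>+x. ennreal (f x) \<partial>lborel) = 1"
    and moment: "(\<integral>\<^sup>+x. ennreal (f x * (x - c)^2) \<partial>lborel) = ennreal V" and "0 \<le> V"
  shows "ereal (1/12) \<le> ereal V * (esssup lborel (\<lambda>x. ereal (f x)))\<^sup>2"
proof -
  have pos: "0 < esssup lborel (\<lambda>x. ereal (f x))"
    using esssup_density_pos[OF f_nonneg f_int] .
  show ?thesis
  proof (cases "esssup lborel (\<lambda>x. ereal (f x))")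
    case PInf
    have "0 < V"
      using square_dist_moment_pos[OF f_nonneg _ f_int, of c] moment \<open>0 \<le> V\<close> by auto
    then show ?thesis using PInf by (simp add: power2_eq_square)
  next
    case (real m)
    have "AE x in lborel. f x \<le> m"
      using esssup_AE[of "\<lambda>x. ereal (f x)" lborel] real by simp
    then have "1/12 \<le> V * m^2"
      using real pos by (intro second_moment_ge_of_density_le[OF f_nonneg _ f_int moment \<open>0 \<le> V\<close>]) auto
    then show ?thesis using real by simp
  qed (use pos in simp)
qed

section \<open>The extremal level-length profile\<close>

text \<open>The level-set length function of the extremal density: affine in \<open>y\<^sup>s\<close>, vanishing
  at the maximum \<open>M\<close> of the density, and normalised to total mass \<open>1\<close> on \<open>(0, M)\<close>.\<close>

definition profile :: "real \<Rightarrow> real \<Rightarrow> real \<Rightarrow> real" where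
  "profile s M y = (1 + s) / (- s * M * M powr s) * (y powr s - M powr s)"

lemma profile_pos:
  assumes "-1 < s" "s < 0" "0 < y" "y < M"
  shows "0 < profile s M y"
proof -
  have "M powr s < y powr s"
    using assms by (intro powr_less_mono2_neg) auto
  then show ?thesis
    unfolding profile_def using assms by (intro mult_pos_pos divide_pos_pos) auto
qed

lemma powr_mult_nat_power:
  fixes x s :: real
  assumes "0 \<le> x" "0 < k"
  shows "x powr (real k * s) = (x powr s) ^ k"
  using assms by (simp add: powr_realpow'[symmetric] powr_powr mult.commute)

lemma has_integral_profile:
  assumes "-1 < s" "s < 0" "0 < M"
  shows "(profile s M has_integral 1) {0<..<M}"
proof -
  have "((\<lambda>y. y powr s) has_integral (M * M powr s / (1 + s))) {0..M}"
    using has_integral_powr_from_0[of s M] assms by (simp add: powr_add add.commute)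
  then have "(profile s M has_integral
      ((1 + s) / (- s * M * M powr s) * (M * M powr s / (1 + s) - M * M powr s))) {0..M}"
    unfolding profile_def[abs_def]
    by (intro has_integral_mult_right has_integral_diff) (use has_integral_const_real[of "M powr s" 0 M] assms in auto)
  moreover have "(1 + s) / (- s * M * M powr s) * (M * M powr s / (1 + s) - M * M powr s) = 1"
  proof -
    have "M * M powr s / (1 + s) - M * M powr s = - s * M * M powr s / (1 + s)"
      using assms by (simp add: field_simps)
    moreover have "- s * M * M powr s \<noteq> 0" "1 + s \<noteq> 0"
      using assms by auto
    ultimately show ?thesis by (simp add: divide_simps)
  qed
  ultimately show ?thesis
    by (simp add: has_integral_Icc_iff_Ioo)
qed

lemma has_integral_profile_cube:
  assumes "-1/3 < s" "s < 0" "0 < M"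
  shows "((\<lambda>y. profile s M y ^ 3) has_integral (6 * (1 + s)^2 / ((1 + 2 * s) * (1 + 3 * s) * M^2))) {0<..<M}"
proof -
  define m where "m = M powr s"
  define \<kappa> where "\<kappa> = (1 + s) / (- s * M * m)"
  have "0 < m" using assms by (simp add: m_def)
  have integral_powr_multiple: "((\<lambda>y. y powr (real k * s)) has_integral (M * m^k / (real k * s + 1))) {0..M}"
    if "0 < k" "k \<le> 3" for k :: nat
  proof -
    have "-1 < real k * s"
      using that assms by (auto simp: numeral_3_eq_3 less_Suc_eq_le le_Suc_eq)
    then show ?thesis
      using has_integral_powr_from_0[of "real k * s" M] assms
        powr_mult_nat_power[of M k s] \<open>0 < k\<close>
      by (simp add: powr_add m_def add.commute)
  qed
  have expand: "profile s M y ^ 3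
      = \<kappa>^3 * (y powr (3 * s) - 3 * m * y powr (2 * s) + 3 * m^2 * y powr s - m^3)" if "0 \<le> y" for y
  proof -
    have profile: "profile s M y = \<kappa> * (y powr s - m)"
      by (simp add: profile_def \<kappa>_def m_def)
    have powers: "y powr (3 * s) = (y powr s)^3" "y powr (2 * s) = (y powr s)^2"
      using powr_mult_nat_power[OF that, of 3 s] powr_mult_nat_power[OF that, of 2 s] by simp_all
    show ?thesis
      unfolding profile powers by (simp add: power3_eq_cube power2_eq_square algebra_simps)
  qed
  define V where "V = \<kappa>^3 * (M * m^3 / (3 * s + 1) - 3 * m * (M * m^2 / (2 * s + 1))
      + 3 * m^2 * (M * m / (s + 1)) - M * m^3)"
  have "((\<lambda>y. \<kappa>^3 * (y powr (3 * s) - 3 * m * y powr (2 * s) + 3 * m^2 * y powr s - m^3)) has_integral V) {0..M}"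
    unfolding V_def using integral_powr_multiple[of 1] integral_powr_multiple[of 2] integral_powr_multiple[of 3]
      has_integral_const_real[of "m^3" 0 M] assms
    by (intro has_integral_mult_right has_integral_diff has_integral_add) auto
  then have "((\<lambda>y. profile s M y ^ 3) has_integral V) {0..M}"
    by (rule has_integral_eq[rotated]) (simp add: expand)
  moreover have "V = \<kappa>^3 * (M * m^3) * (1 / (1 + 3 * s) - 3 / (1 + 2 * s) + 3 / (1 + s) - 1)"
    by (simp add: V_def algebra_simps power3_eq_cube power2_eq_square)
  moreover have "1 / (1 + 3 * s) - 3 / (1 + 2 * s) + 3 / (1 + s) - 1
      = - 6 * s^3 / ((1 + s) * (1 + 2 * s) * (1 + 3 * s))"
    using assms by (simp add: divide_simps) algebra
  moreover have "\<kappa>^3 * (M * m^3) * (- 6 * s^3 / ((1 + s) * (1 + 2 * s) * (1 + 3 * s)))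
      = 6 * (1 + s)^2 / ((1 + 2 * s) * (1 + 3 * s) * M^2)"
    using assms \<open>0 < m\<close> unfolding \<kappa>_def by (simp add: divide_simps) algebra
  ultimately show ?thesis
    by (simp add: has_integral_Icc_iff_Ioo)
qed

section \<open>Superlevel sets of \<open>s\<close>-concave densities\<close>

lemma nn_integral_layer_cake:
  fixes f :: "real \<Rightarrow> real" and g :: "real \<Rightarrow> ennreal"
  assumes f_nonneg: "\<And>x. 0 \<le> f x" and [measurable]: "f \<in> borel_measurable borel" "g \<in> borel_measurable borel"
  shows "(\<integral>\<^sup>+x. ennreal (f x) * g x \<partial>lborel)
       = (\<integral>\<^sup>+y. indicator {0<..} y * (\<integral>\<^sup>+x. indicator {x. y < f x} x * g x \<partial>lborel) \<partial>lborel)"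
proof -
  have "ennreal (f x) = (\<integral>\<^sup>+y. indicator {0<..<f x} y \<partial>lborel)" for x
    using f_nonneg[of x] by simp
  then have "(\<integral>\<^sup>+x. ennreal (f x) * g x \<partial>lborel)
      = (\<integral>\<^sup>+x. (\<integral>\<^sup>+y. indicator {0<..<f x} y * g x \<partial>lborel) \<partial>lborel)"
    by (simp add: nn_integral_multc)
  also have "\<dots> = (\<integral>\<^sup>+y. (\<integral>\<^sup>+x. indicator {0<..<f x} y * g x \<partial>lborel) \<partial>lborel)"
  proof (rule lborel_pair.Fubini'[symmetric])
    have "(\<lambda>(x, y). indicator {0<..<f x} y * g x :: ennreal)
        = (\<lambda>p. indicator {p. 0 < snd p \<and> snd p < f (fst p)} p * g (fst p))"
      by (auto simp: indicator_def fun_eq_iff)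
    also have "\<dots> \<in> borel_measurable (lborel \<Otimes>\<^sub>M lborel)"
      by measurable
    finally show "(\<lambda>(x, y). indicator {0<..<f x} y * g x) \<in> borel_measurable (lborel \<Otimes>\<^sub>M lborel)" .
  qed
  also have "\<dots> = (\<integral>\<^sup>+y. indicator {0<..} y * (\<integral>\<^sup>+x. indicator {x. y < f x} x * g x \<partial>lborel) \<partial>lborel)"
  proof (rule nn_integral_cong)
    fix y :: real
    have "(\<integral>\<^sup>+x. indicator {0<..<f x} y * g x \<partial>lborel)
        = (\<integral>\<^sup>+x. indicator {0<..} y * (indicator {x. y < f x} x * g x) \<partial>lborel)"
      by (rule nn_integral_cong) (auto simp: indicator_def)
    also have "\<dots> = indicator {0<..} y * (\<integral>\<^sup>+x. indicator {x. y < f x} x * g x \<partial>lborel)"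
      by (rule nn_integral_cmult) measurable
    finally show "(\<integral>\<^sup>+x. indicator {0<..<f x} y * g x \<partial>lborel)
        = indicator {0<..} y * (\<integral>\<^sup>+x. indicator {x. y < f x} x * g x \<partial>lborel)" .
  qed
  finally show ?thesis .
qed

lemma borel_measurable_measure_superlevel:
  fixes f :: "real \<Rightarrow> real"
  assumes [measurable]: "f \<in> borel_measurable borel"
  shows "(\<lambda>y. measure lborel {x. y < f x}) \<in> borel_measurable borel"
proof -
  have "(\<lambda>(y, x). indicator {x. y < f x} x :: ennreal) = indicator {p. fst p < f (snd p)}"
    by (auto simp: indicator_def fun_eq_iff)
  also have "\<dots> \<in> borel_measurable (lborel \<Otimes>\<^sub>M lborel)"
    by measurable
  finally have "(\<lambda>y. \<integral>\<^sup>+x. indicator {x. y < f x} x \<partial>lborel) \<in> borel_measurable lborel"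
    by (rule lborel.borel_measurable_nn_integral)
  then have "(\<lambda>y. enn2real (emeasure lborel {x. y < f x})) \<in> borel_measurable borel"
    by simp
  then show ?thesis
    by (simp add: measure_def)
qed

locale s_concave_density =
  fixes s :: real and f :: "real \<Rightarrow> real"
  assumes s_gt: "-1 < s" and s_neg: "s < 0"
    and measurable_f [measurable]: "f \<in> borel_measurable borel"
    and integral_f: "(\<integral>\<^sup>+x. ennreal (f x) \<partial>lborel) = 1"
    and s_concave_f: "s_concave s f"
begin

lemma f_nonneg: "0 \<le> f x"
  using s_concave_f by (simp add: s_concave_def)

definition power_mean :: "real \<Rightarrow> real \<Rightarrow> real \<Rightarrow> real" where
  "power_mean \<theta> a b = (\<theta> * a powr s + (1 - \<theta>) * b powr s) powr (1 / s)"

lemma power_mean_le_f: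
  assumes "0 < f x" "0 < f z" "0 < \<theta>" "\<theta> < 1"
  shows "power_mean \<theta> (f x) (f z) \<le> f (\<theta> * x + (1 - \<theta>) * z)"
proof -
  have "s_mean s \<theta> (f x) (f z) \<le> f (\<theta> * x + (1 - \<theta>) * z)"
    using s_concave_f assms unfolding s_concave_def by blast
  then show ?thesis
    using assms s_neg unfolding s_mean_def power_mean_def by auto
qed

lemma power_mean_strict_mono:
  assumes "0 < y1" "y1 < a" "0 < y2" "y2 < b" "0 < \<theta>" "\<theta> < 1"
  shows "power_mean \<theta> y1 y2 < power_mean \<theta> a b"
proof -
  have "a powr s < y1 powr s" "b powr s < y2 powr s"
    using assms s_neg by (auto intro!: powr_less_mono2_neg)
  then have "\<theta> * a powr s + (1 - \<theta>) * b powr s < \<theta> * y1 powr s + (1 - \<theta>) * y2 powr s"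
    using assms by (intro add_less_le_mono mult_strict_left_mono mult_left_mono) auto
  moreover have "0 < \<theta> * a powr s + (1 - \<theta>) * b powr s"
    using assms by (intro add_pos_nonneg) auto
  ultimately show ?thesis
    unfolding power_mean_def using s_neg by (intro powr_less_mono2_neg) auto
qed

lemma power_mean_eqI:
  assumes "0 < y" "\<theta> * a powr s + (1 - \<theta>) * b powr s = y powr s"
  shows "power_mean \<theta> a b = y"
  using assms s_neg by (simp add: power_mean_def powr_powr)

lemma power_mean_pos:
  assumes "0 < y1" "0 < y2" "0 < \<theta>" "\<theta> < 1"
  shows "0 < power_mean \<theta> y1 y2"
proof -
  have "0 < \<theta> * y1 powr s + (1 - \<theta>) * y2 powr s"
    using assms by (intro add_pos_nonneg) auto
  then show ?thesis unfolding power_mean_def by simp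
qed

definition superlevel :: "real \<Rightarrow> real set" where
  "superlevel y = {x. y < f x}"

definition level_length :: "real \<Rightarrow> real" where
  "level_length y = measure lborel (superlevel y)"

lemma sets_superlevel [measurable]: "superlevel y \<in> sets lborel"
  unfolding superlevel_def by measurable

lemma level_length_nonneg: "0 \<le> level_length y"
  by (simp add: level_length_def)

lemma superlevel_antimono: "y \<le> y' \<Longrightarrow> superlevel y' \<subseteq> superlevel y"
  by (auto simp: superlevel_def)

lemma superlevel_between:
  assumes "0 < y" "u \<in> superlevel y" "w \<in> superlevel y" "u \<le> z" "z \<le> w"
  shows "z \<in> superlevel y"
proof (cases "z = u \<or> z = w")
  case False
  then have "u < z" "z < w" using assms by auto
  define \<theta> where "\<theta> = (w - z) / (w - u)"
  have \<theta>: "0 < \<theta>" "\<theta> < 1" using \<open>u < z\<close> \<open>z < w\<close> by (auto simp: \<theta>_def field_simps)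
  have "\<theta> * (w - u) = w - z"
    using \<open>u < z\<close> \<open>z < w\<close> by (simp add: \<theta>_def)
  then have z: "z = \<theta> * u + (1 - \<theta>) * w"
    by (simp add: algebra_simps)
  have "y < f u" "y < f w" using assms by (auto simp: superlevel_def)
  have "y = power_mean \<theta> y y"
    using power_mean_eqI[of y \<theta> y y] \<open>0 < y\<close> by (simp add: algebra_simps)
  also have "\<dots> < power_mean \<theta> (f u) (f w)"
    using power_mean_strict_mono \<open>y < f u\<close> \<open>y < f w\<close> \<theta> \<open>0 < y\<close> by simp
  also have "\<dots> \<le> f z"
    unfolding z using power_mean_le_f \<open>y < f u\<close> \<open>y < f w\<close> \<theta> \<open>0 < y\<close> by simp
  finally show ?thesis by (simp add: superlevel_def)
qed (use assms in auto)

lemma emeasure_superlevel_le: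
  assumes "0 < y"
  shows "emeasure lborel (superlevel y) \<le> ennreal (1 / y)"
proof -
  have "ennreal y * emeasure lborel (superlevel y) = (\<integral>\<^sup>+x. ennreal y * indicator (superlevel y) x \<partial>lborel)"
    by (simp add: nn_integral_cmult nn_integral_indicator[OF sets_superlevel])
  also have "\<dots> \<le> (\<integral>\<^sup>+x. ennreal (f x) \<partial>lborel)"
    by (intro nn_integral_mono) (auto simp: superlevel_def indicator_def intro!: ennreal_leI)
  finally have "ennreal y * emeasure lborel (superlevel y) \<le> 1"
    by (simp add: integral_f)
  then have "ennreal (1 / y) * (ennreal y * emeasure lborel (superlevel y)) \<le> ennreal (1 / y)"
    by (metis mult.comm_neutral mult_left_mono zero_le)
  then show ?thesis
    using assms by (simp add: mult.assoc[symmetric] ennreal_mult[symmetric])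
qed

lemma fmeasurable_superlevel: "0 < y \<Longrightarrow> superlevel y \<in> fmeasurable lborel"
  using le_less_trans[OF emeasure_superlevel_le ennreal_less_top] sets_superlevel
  by (intro fmeasurableI) auto

lemma emeasure_superlevel: "0 < y \<Longrightarrow> emeasure lborel (superlevel y) = ennreal (level_length y)"
  unfolding level_length_def using fmeasurable_superlevel
  by (intro emeasure_eq_ennreal_measure) (simp add: fmeasurable_def less_top)

lemma level_length_antimono:
  assumes "0 < y" "y \<le> y'"
  shows "level_length y' \<le> level_length y"
  unfolding level_length_def
  using measure_mono_fmeasurable[OF superlevel_antimono[OF assms(2)] _ fmeasurable_superlevel[OF assms(1)]]
    sets_superlevel[of y']
  by simp

lemma superlevel_bounded:
  assumes "0 < y" "superlevel y \<noteq> {}"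
  shows "bdd_above (superlevel y)" "bdd_below (superlevel y)"
proof -
  obtain x0 where x0: "x0 \<in> superlevel y" using assms by auto
  obtain n :: nat where n: "1 / y < real n" using reals_Archimedean2 by blast
  have no_long_interval: False if sub: "S \<subseteq> superlevel y" and "emeasure lborel S = ennreal (real n)" for S
  proof -
    have "ennreal (real n) \<le> ennreal (1 / y)"
      using emeasure_mono[OF sub sets_superlevel] emeasure_superlevel_le[OF assms(1)] that(2) by simp
    then show False using n assms by (simp add: ennreal_le_iff)
  qed
  show "bdd_above (superlevel y)"
  proof (rule ccontr)
    assume "\<not> bdd_above (superlevel y)"
    have "{x0..x0 + real n} \<subseteq> superlevel y"
    proof
      fix z assume "z \<in> {x0..x0 + real n}"
      moreover obtain w where "w \<in> superlevel y" "z < w"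
        using \<open>\<not> bdd_above (superlevel y)\<close> unfolding bdd_above_def by (meson not_le)
      ultimately show "z \<in> superlevel y"
        using superlevel_between[OF assms(1) x0] by auto
    qed
    then show False by (rule no_long_interval) simp
  qed
  show "bdd_below (superlevel y)"
  proof (rule ccontr)
    assume "\<not> bdd_below (superlevel y)"
    have "{x0 - real n..x0} \<subseteq> superlevel y"
    proof
      fix z assume "z \<in> {x0 - real n..x0}"
      moreover obtain w where "w \<in> superlevel y" "w < z"
        using \<open>\<not> bdd_below (superlevel y)\<close> unfolding bdd_below_def by (meson not_le)
      ultimately show "z \<in> superlevel y"
        using superlevel_between[OF assms(1) _ x0] by auto
    qed
    then show False by (rule no_long_interval) simp
  qed
qed

definition level_inf :: "real \<Rightarrow> real" where
  "level_inf y = Inf (superlevel y)"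

definition level_sup :: "real \<Rightarrow> real" where
  "level_sup y = Sup (superlevel y)"

lemma superlevel_interval:
  assumes "0 < y" "superlevel y \<noteq> {}"
  shows "{level_inf y<..<level_sup y} \<subseteq> superlevel y" "superlevel y \<subseteq> {level_inf y..level_sup y}"
    "level_inf y \<le> level_sup y" "level_length y = level_sup y - level_inf y"
proof -
  note bounded = superlevel_bounded[OF assms]
  show inner: "{level_inf y<..<level_sup y} \<subseteq> superlevel y"
  proof
    fix z assume z: "z \<in> {level_inf y<..<level_sup y}"
    obtain u where "u \<in> superlevel y" "u < z"
      using z cInf_less_iff[OF assms(2) bounded(2)] by (auto simp: level_inf_def)
    moreover obtain w where "w \<in> superlevel y" "z < w"
      using z less_cSup_iff[OF assms(2) bounded(1)] by (auto simp: level_sup_def)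
    ultimately show "z \<in> superlevel y"
      using superlevel_between[OF assms(1)] by (meson less_imp_le)
  qed
  show outer: "superlevel y \<subseteq> {level_inf y..level_sup y}"
    using cInf_lower[OF _ bounded(2)] cSup_upper[OF _ bounded(1)]
    by (auto simp: level_inf_def level_sup_def)
  then show le: "level_inf y \<le> level_sup y"
    using assms(2) by fastforce
  have "emeasure lborel {level_inf y<..<level_sup y} \<le> emeasure lborel (superlevel y)"
    "emeasure lborel (superlevel y) \<le> emeasure lborel {level_inf y..level_sup y}"
    using emeasure_mono[OF inner sets_superlevel] emeasure_mono[OF outer] by simp_all
  then have "emeasure lborel (superlevel y) = ennreal (level_sup y - level_inf y)"
    using le by (simp add: antisym)
  then show "level_length y = level_sup y - level_inf y"
    using le by (simp add: level_length_def measure_def)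
qed

lemma superlevel_interpolate:
  assumes "0 < y" "superlevel y \<noteq> {}" "0 < t" "t < 1"
  shows "level_inf y + t * level_length y \<in> superlevel y"
proof (cases "level_inf y < level_sup y")
  case True
  have "0 < t * level_length y" "t * level_length y < 1 * level_length y"
    using True assms(3,4) superlevel_interval(4)[OF assms(1,2)] by (auto intro: mult_strict_right_mono)
  then show ?thesis
    using superlevel_interval(1,4)[OF assms(1,2)] by auto
next
  case False
  then have "level_length y = 0" "level_inf y = level_sup y"
    using superlevel_interval[OF assms(1,2)] by auto
  then show ?thesis
    using superlevel_interval(2)[OF assms(1,2)] assms(2) by auto
qed

text \<open>Brunn--Minkowski: the \<open>\<theta>\<close>-combination of two superlevel intervals lies in the
  superlevel set of the power mean of their levels.\<close>

lemma level_length_concave: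
  assumes y1: "0 < y1" "superlevel y1 \<noteq> {}" and y2: "0 < y2" "superlevel y2 \<noteq> {}"
    and \<theta>: "0 < \<theta>" "\<theta> < 1"
  shows "\<theta> * level_length y1 + (1 - \<theta>) * level_length y2 \<le> level_length (power_mean \<theta> y1 y2)"
proof -
  define y where "y = power_mean \<theta> y1 y2"
  define D where "D = \<theta> * level_length y1 + (1 - \<theta>) * level_length y2"
  define p where "p = \<theta> * level_inf y1 + (1 - \<theta>) * level_inf y2"
  have "0 < y" using power_mean_pos y1 y2 \<theta> by (simp add: y_def)
  have "{p<..<p + D} \<subseteq> superlevel y"
  proof
    fix z assume z: "z \<in> {p<..<p + D}"
    define t where "t = (z - p) / D"
    have "0 < t" "t < 1" using z by (auto simp: t_def field_simps)
    define x1 where "x1 = level_inf y1 + t * level_length y1"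
    define x2 where "x2 = level_inf y2 + t * level_length y2"
    have "y1 < f x1" "y2 < f x2"
      using superlevel_interpolate[OF y1 \<open>0 < t\<close> \<open>t < 1\<close>] superlevel_interpolate[OF y2 \<open>0 < t\<close> \<open>t < 1\<close>]
      by (auto simp: x1_def x2_def superlevel_def)
    have "t * D = z - p"
      using z by (simp add: t_def)
    then have "z = \<theta> * x1 + (1 - \<theta>) * x2"
      by (simp add: x1_def x2_def p_def D_def algebra_simps)
    moreover have "y < power_mean \<theta> (f x1) (f x2)"
      unfolding y_def using \<open>y1 < f x1\<close> \<open>y2 < f x2\<close> y1 y2 \<theta> by (intro power_mean_strict_mono) auto
    moreover have "power_mean \<theta> (f x1) (f x2) \<le> f (\<theta> * x1 + (1 - \<theta>) * x2)"
      using \<open>y1 < f x1\<close> \<open>y2 < f x2\<close> y1 y2 \<theta> by (intro power_mean_le_f) auto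
    ultimately show "z \<in> superlevel y" by (simp add: superlevel_def)
  qed
  then have "measure lborel {p<..<p + D} \<le> level_length y"
    unfolding level_length_def using fmeasurable_superlevel[OF \<open>0 < y\<close>]
    by (intro measure_mono_fmeasurable) auto
  moreover have "0 \<le> D"
    unfolding D_def using \<theta> level_length_nonneg by simp
  ultimately show ?thesis
    by (simp add: D_def y_def)
qed

lemma nn_integral_emeasure_superlevel:
  "(\<integral>\<^sup>+y. indicator {0<..} y * emeasure lborel (superlevel y) \<partial>lborel) = 1"
  using nn_integral_layer_cake[OF f_nonneg measurable_f, of "\<lambda>x. 1"] integral_f
  by (simp add: superlevel_def)

definition ess_max :: ereal where
  "ess_max = esssup lborel (\<lambda>x. ereal (f x))"

lemma superlevel_below_ess_max:
  assumes "0 < y" "ereal y < ess_max"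
  shows "superlevel y \<noteq> {}" "0 < level_length y"
proof -
  have "0 < emeasure lborel {x \<in> space lborel. ereal y < ereal (f x)}"
    using assms unfolding ess_max_def by (intro esssup_pos_measure) measurable
  then have "0 < emeasure lborel (superlevel y)"
    by (simp add: superlevel_def)
  then show "superlevel y \<noteq> {}" "0 < level_length y"
    using emeasure_superlevel[OF assms(1)] by auto
qed

lemma emeasure_superlevel_above_ess_max:
  assumes "ess_max \<le> ereal y"
  shows "emeasure lborel (superlevel y) = 0"
proof -
  have "superlevel y \<subseteq> {x \<in> space lborel. ess_max < ereal (f x)}"
    using assms by (auto simp: superlevel_def intro: le_less_trans)
  moreover have "{x \<in> space lborel. ess_max < ereal (f x)} \<in> sets lborel"
    by measurable
  moreover have "emeasure lborel {x \<in> space lborel. ess_max < ereal (f x)} = 0"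
    unfolding ess_max_def by (rule esssup_zero_measure)
  ultimately show ?thesis
    by (metis emeasure_mono le_zero_eq)
qed

lemma ess_max_pos: "0 < ess_max"
  unfolding ess_max_def using esssup_density_pos[OF f_nonneg integral_f] .

text \<open>Brunn--Minkowski for the levels \<open>1\<close> and \<open>Y = 2 powr (-1/s) \<cdot> y\<close>, whose power mean is
  \<open>y\<close> for a weight \<open>\<theta> \<ge> y\<^sup>s/2\<close>.\<close>

lemma level_length_ge_powr_if_unbounded:
  assumes nonempty: "\<And>y. 0 < y \<Longrightarrow> superlevel y \<noteq> {}" and "1 < y"
  shows "level_length 1 / 2 * y powr s \<le> level_length y"
proof -
  define Y where "Y = y * 2 powr (- 1 / s)"
  define q where "q = y powr s / 2"
  define \<theta> where "\<theta> = q / (1 - q)"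
  have "0 < Y" using \<open>1 < y\<close> by (simp add: Y_def)
  have "Y powr s = y powr s * (2 powr (- 1 / s)) powr s"
    unfolding Y_def by (rule powr_mult)
  also have "(2 powr (- 1 / s)) powr s = 2 powr (- 1)"
    using s_neg by (simp add: powr_powr)
  also have "(2::real) powr (- 1) = 1 / 2"
    by (simp add: powr_minus_divide)
  finally have "Y powr s = q"
    by (simp add: q_def)
  have "y powr s < 1"
    using \<open>1 < y\<close> powr_less_mono2_neg[OF s_neg, of 1 y] by simp
  then have q: "0 < q" "q < 1/2"
    using \<open>1 < y\<close> by (auto simp: q_def)
  then have \<theta>: "0 < \<theta>" "\<theta> < 1" "q \<le> \<theta>"
    by (auto simp: \<theta>_def divide_less_eq le_divide_eq mult_le_cancel_left1)
  have "\<theta> * (1 - q) = q"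
    using q by (simp add: \<theta>_def)
  moreover have "y powr s = 2 * q"
    by (simp add: q_def)
  ultimately have "\<theta> * 1 powr s + (1 - \<theta>) * Y powr s = y powr s"
    unfolding \<open>Y powr s = q\<close> by (simp add: algebra_simps)
  then have "power_mean \<theta> 1 Y = y"
    using \<open>1 < y\<close> by (intro power_mean_eqI) auto
  moreover have "\<theta> * level_length 1 + (1 - \<theta>) * level_length Y \<le> level_length (power_mean \<theta> 1 Y)"
    using nonempty \<open>0 < Y\<close> \<theta> by (intro level_length_concave) auto
  moreover have "0 \<le> (1 - \<theta>) * level_length Y"
    using \<theta> level_length_nonneg by simp
  moreover have "level_length 1 / 2 * y powr s \<le> \<theta> * level_length 1"
    using \<theta> level_length_nonneg[of 1] mult_right_mono[of q \<theta> "level_length 1"] by (simp add: q_def mult.commute)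
  ultimately show ?thesis
    by simp
qed

text \<open>By the previous lemma an essentially unbounded density would have layer-cake mass
  \<open>\<ge> \<integral>\<^sub>1\<^sup>T c y\<^sup>s dy\<close>, which exceeds \<open>1\<close> for large \<open>T\<close> because \<open>s > -1\<close>.\<close>

lemma ess_max_finite: "ess_max < \<infinity>"
proof (rule ccontr)
  assume "\<not> ess_max < \<infinity>"
  then have nonempty: "superlevel y \<noteq> {}" "0 < level_length y" if "0 < y" for y
    using superlevel_below_ess_max[OF that] by auto
  define c where "c = level_length 1 / 2"
  have "0 < c" using nonempty[of 1] by (simp add: c_def)
  have lower: "c * y powr s \<le> level_length y" if "1 \<le> y" for y
    using level_length_ge_powr_if_unbounded[OF nonempty(1), of y] that by (cases "y = 1") (auto simp: c_def level_length_nonneg)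
  define T where "T = (1 + 2 * (1 + s) / c) powr (1 / (1 + s))"
  have "0 < 1 + s" using s_gt by simp
  have T: "T powr (1 + s) = 1 + 2 * (1 + s) / c" "1 \<le> T"
    unfolding T_def using \<open>0 < 1 + s\<close> \<open>0 < c\<close> by (auto simp: powr_powr intro!: ge_one_powr_ge_zero)
  have "((\<lambda>y. c * y powr s) has_integral (c * ((T powr (1 + s) - 1 powr (1 + s)) / (s + 1)))) {1..T}"
    using has_integral_powr_Icc[of 1 T s] T s_gt by (intro has_integral_mult_right) (simp add: add.commute)
  moreover have "c * ((T powr (1 + s) - 1 powr (1 + s)) / (s + 1)) = 2"
    using T \<open>0 < c\<close> \<open>0 < 1 + s\<close> by (simp add: add.commute divide_simps right_diff_distrib mult.commute)
  ultimately have "(\<integral>\<^sup>+y. ennreal (c * y powr s) * indicator {1..T} y \<partial>lborel) = 2"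
    using nn_integral_has_integral_lebesgue'[of "{1..T}" "\<lambda>y. c * y powr s"] \<open>0 < c\<close> by simp
  moreover have "(\<integral>\<^sup>+y. ennreal (c * y powr s) * indicator {1..T} y \<partial>lborel)
      \<le> (\<integral>\<^sup>+y. indicator {0<..} y * emeasure lborel (superlevel y) \<partial>lborel)"
  proof (rule nn_integral_mono)
    fix y :: real
    show "ennreal (c * y powr s) * indicator {1..T} y \<le> indicator {0<..} y * emeasure lborel (superlevel y)"
      using lower[of y] emeasure_superlevel[of y] by (cases "y \<in> {1..T}") (auto intro!: ennreal_leI)
  qed
  ultimately show False
    using nn_integral_emeasure_superlevel by simp
qed

definition peak :: real where
  "peak = real_of_ereal ess_max"

lemma ess_max_eq_peak: "ess_max = ereal peak" and peak_pos: "0 < peak"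
proof -
  show "ess_max = ereal peak"
    using ess_max_finite ess_max_pos unfolding peak_def by (cases ess_max) auto
  then show "0 < peak"
    using ess_max_pos by simp
qed

lemma level_length_above_peak:
  assumes "peak \<le> y"
  shows "emeasure lborel (superlevel y) = 0" "level_length y = 0"
proof -
  show "emeasure lborel (superlevel y) = 0"
    using emeasure_superlevel_above_ess_max assms ess_max_eq_peak by simp
  then show "level_length y = 0"
    by (simp add: level_length_def measure_def)
qed

lemma level_length_below_peak:
  assumes "0 < y" "y < peak"
  shows "superlevel y \<noteq> {}" "0 < level_length y"
  using superlevel_below_ess_max[OF assms(1)] assms ess_max_eq_peak by auto

text \<open>Brunn--Minkowski for the levels \<open>y\<close> and \<open>y\<^sub>2 \<in> (y', peak)\<close>, with the weight that makes
  their power mean equal to \<open>y'\<close>, gives \<open>L y' \<ge> (y'\<^sup>s - y\<^sub>2\<^sup>s) / (y\<^sup>s - y\<^sub>2\<^sup>s) \<cdot> L y\<close>; as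
  \<open>y\<^sub>2 \<rightarrow> peak\<close> the factor tends to \<open>profile y' / profile y\<close>.\<close>

lemma profile_le_level_length_upward:
  assumes y: "0 < y" "y < y'" "y' < peak" and le: "profile s peak y \<le> level_length y"
  shows "profile s peak y' \<le> level_length y'"
proof -
  define g where "g y2 = (y' powr s - y2 powr s) / (y powr s - y2 powr s)" for y2
  have step: "g y2 * level_length y \<le> level_length y'" if y2: "y' < y2" "y2 < peak" for y2
  proof -
    have "y2 powr s < y' powr s" "y' powr s < y powr s"
      using powr_less_mono2_neg[OF s_neg] y y2 by auto
    then have \<theta>: "0 < g y2" "g y2 < 1" "g y2 * (y powr s - y2 powr s) = y' powr s - y2 powr s"
      by (auto simp: g_def divide_less_eq)
    have "g y2 * y powr s + (1 - g y2) * y2 powr s = y' powr s"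
      using \<theta>(3) by (simp add: algebra_simps)
    then have "power_mean (g y2) y y2 = y'"
      using y by (intro power_mean_eqI) auto
    moreover have "g y2 * level_length y + (1 - g y2) * level_length y2 \<le> level_length (power_mean (g y2) y y2)"
      using level_length_below_peak[of y] level_length_below_peak[of y2] y y2 \<theta>
      by (intro level_length_concave) auto
    moreover have "0 \<le> (1 - g y2) * level_length y2"
      using \<theta> level_length_nonneg by simp
    ultimately show ?thesis by simp
  qed
  have "peak powr s < y' powr s" "y' powr s < y powr s"
    using powr_less_mono2_neg[OF s_neg] y by auto
  have "((\<lambda>y2. g y2 * level_length y) \<longlongrightarrow> g peak * level_length y) (at_left peak)"
    unfolding g_def using peak_pos \<open>peak powr s < y' powr s\<close> \<open>y' powr s < y powr s\<close>
    by (intro tendsto_intros) auto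
  moreover have "eventually (\<lambda>y2. g y2 * level_length y \<le> level_length y') (at_left peak)"
    using eventually_at_left_real[OF y(3)] by eventually_elim (auto intro: step)
  ultimately have "g peak * level_length y \<le> level_length y'"
    by (rule tendsto_le[OF trivial_limit_at_left_real tendsto_const])
  moreover have "profile s peak y' = g peak * profile s peak y"
    using \<open>peak powr s < y' powr s\<close> \<open>y' powr s < y powr s\<close> by (simp add: profile_def g_def)
  moreover have "0 \<le> g peak"
    using \<open>peak powr s < y' powr s\<close> \<open>y' powr s < y powr s\<close> by (simp add: g_def)
  ultimately show ?thesis
    using le by (metis mult_left_mono order.trans)
qed

lemma level_inf_le_level_sup:
  assumes "0 < y" "y < peak" "0 < y'" "y' < peak"
  shows "level_inf y \<le> level_sup y'"
proof -
  define z where "z = max y y'"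
  have z: "0 < z" "z < peak" using assms by (auto simp: z_def)
  have nonempty: "superlevel z \<noteq> {}" "superlevel y \<noteq> {}" "superlevel y' \<noteq> {}"
    using level_length_below_peak assms z by auto
  have "level_inf y \<le> level_inf z"
    unfolding level_inf_def using superlevel_antimono[of y z] superlevel_bounded(2)[OF assms(1) nonempty(2)]
    by (intro cInf_superset_mono[OF nonempty(1)]) (auto simp: z_def)
  also have "\<dots> \<le> level_sup z"
    using superlevel_interval(3)[OF z(1) nonempty(1)] .
  also have "\<dots> \<le> level_sup y'"
    unfolding level_sup_def using superlevel_antimono[of y' z] superlevel_bounded(1)[OF assms(3) nonempty(3)]
    by (intro cSup_subset_mono[OF nonempty(1)]) (auto simp: z_def)
  finally show ?thesis .
qed

text \<open>The superlevel intervals are nested, so the supremum of their left endpoints lies in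
  the closure of each of them.\<close>

definition center :: real where
  "center = Sup (level_inf ` {0<..<peak})"

lemma center_between:
  assumes "0 < y" "y < peak"
  shows "level_inf y \<le> center" "center \<le> level_sup y"
proof -
  have half: "0 < peak / 2" "peak / 2 < peak" using peak_pos by auto
  have "bdd_above (level_inf ` {0<..<peak})"
    by (rule bdd_aboveI[where M = "level_sup (peak / 2)"]) (auto intro: level_inf_le_level_sup[OF _ _ half])
  then show "level_inf y \<le> center"
    unfolding center_def using assms by (intro cSup_upper) auto
  show "center \<le> level_sup y"
    unfolding center_def using half by (intro cSup_least) (auto intro: level_inf_le_level_sup[OF _ _ assms])
qed

lemma nn_integral_superlevel_square_dist_center:
  assumes "0 < y" "y < peak"
  shows "(\<integral>\<^sup>+x. indicator (superlevel y) x * ennreal ((x - center)^2) \<partial>lborel) \<le> ennreal (level_length y ^ 3 / 3)"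
proof -
  have nonempty: "superlevel y \<noteq> {}"
    using level_length_below_peak[OF assms] by simp
  note interval = superlevel_interval[OF assms(1) nonempty] and between = center_between[OF assms]
  have "(\<integral>\<^sup>+x. indicator (superlevel y) x * ennreal ((x - center)^2) \<partial>lborel)
      \<le> (\<integral>\<^sup>+x. indicator {level_inf y..level_sup y} x * ennreal ((x - center)^2) \<partial>lborel)"
    using interval(2) by (intro nn_integral_mono mult_right_mono) (auto simp: indicator_def)
  also have "\<dots> = ennreal (((level_sup y - center)^3 + (center - level_inf y)^3) / 3)"
    using nn_integral_Icc_square_dist[OF between] .
  also have "\<dots> \<le> ennreal (level_length y ^ 3 / 3)"
  proof (rule ennreal_leI)
    define p q where "p = level_sup y - center" and "q = center - level_inf y"
    have "(p + q)^3 = p^3 + q^3 + 3 * p * q * (p + q)"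
      by algebra
    moreover have "0 \<le> 3 * p * q * (p + q)"
      using between by (simp add: p_def q_def)
    ultimately have "(level_sup y - center)^3 + (center - level_inf y)^3 \<le> ((level_sup y - center) + (center - level_inf y))^3"
      by (simp add: p_def q_def)
    then show "((level_sup y - center)^3 + (center - level_inf y)^3) / 3 \<le> level_length y ^ 3 / 3"
      using interval(4) by simp
  qed
  finally show ?thesis .
qed

lemma nn_integral_square_dist_center_le:
  "(\<integral>\<^sup>+x. ennreal (f x) * ennreal ((x - center)^2) \<partial>lborel)
    \<le> (\<integral>\<^sup>+y. indicator {0<..<peak} y * ennreal (level_length y ^ 3 / 3) \<partial>lborel)"
proof -
  have "(\<integral>\<^sup>+x. ennreal (f x) * ennreal ((x - center)^2) \<partial>lborel)
      = (\<integral>\<^sup>+y. indicator {0<..} y * (\<integral>\<^sup>+x. indicator (superlevel y) x * ennreal ((x - center)^2) \<partial>lborel) \<partial>lborel)"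
    unfolding superlevel_def by (rule nn_integral_layer_cake[OF f_nonneg]) measurable
  also have "\<dots> \<le> (\<integral>\<^sup>+y. indicator {0<..<peak} y * ennreal (level_length y ^ 3 / 3) \<partial>lborel)"
  proof (rule nn_integral_mono)
    fix y :: real
    have "(\<integral>\<^sup>+x. indicator (superlevel y) x * ennreal ((x - center)^2) \<partial>lborel) = 0" if "peak \<le> y"
    proof -
      have "AE x in lborel. x \<notin> superlevel y"
        using level_length_above_peak(1)[OF that] sets_superlevel by (intro AE_not_in) (simp add: null_sets_def)
      then show ?thesis
        by (subst nn_integral_cong_AE[where v = "\<lambda>x. 0"]) (auto elim!: eventually_mono)
    qed
    then show "indicator {0<..} y * (\<integral>\<^sup>+x. indicator (superlevel y) x * ennreal ((x - center)^2) \<partial>lborel)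
        \<le> indicator {0<..<peak} y * ennreal (level_length y ^ 3 / 3)"
      using nn_integral_superlevel_square_dist_center[of y] by (cases "0 < y"; cases "y < peak") auto
  qed
  finally show ?thesis .
qed

lemma borel_measurable_level_length [measurable]: "level_length \<in> borel_measurable borel"
  unfolding level_length_def[abs_def] superlevel_def
  using borel_measurable_measure_superlevel[OF measurable_f] .

lemma nn_integral_level_length:
  "(\<integral>\<^sup>+y. indicator {0<..<peak} y * ennreal (level_length y) \<partial>lborel) = 1"
proof -
  have "(\<integral>\<^sup>+y. indicator {0<..<peak} y * ennreal (level_length y) \<partial>lborel)
      = (\<integral>\<^sup>+y. indicator {0<..} y * emeasure lborel (superlevel y) \<partial>lborel)"
  proof (rule nn_integral_cong)
    fix y :: real
    show "indicator {0<..<peak} y * ennreal (level_length y) = indicator {0<..} y * emeasure lborel (superlevel y)"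
      using emeasure_superlevel[of y] level_length_above_peak[of y] by (cases "0 < y"; cases "y < peak") auto
  qed
  then show ?thesis
    using nn_integral_emeasure_superlevel by simp
qed

lemma nn_integral_profile:
  "(\<integral>\<^sup>+y. indicator {0<..<peak} y * ennreal (profile s peak y) \<partial>lborel) = 1"
  using nn_integral_has_integral_lebesgue'[OF _ has_integral_profile[OF s_gt s_neg peak_pos]]
    profile_pos[OF s_gt s_neg] by (simp add: less_imp_le mult.commute)

lemma nn_integral_profile_cube:
  assumes "-1/3 < s"
  shows "(\<integral>\<^sup>+y. indicator {0<..<peak} y * ennreal (profile s peak y ^ 3) \<partial>lborel)
    = ennreal (6 * (1 + s)^2 / ((1 + 2 * s) * (1 + 3 * s) * peak^2))"
  using nn_integral_has_integral_lebesgue'[OF _ has_integral_profile_cube[OF assms s_neg peak_pos]]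
    profile_pos[OF s_gt s_neg] by (simp add: less_imp_le mult.commute)

lemma nn_integral_level_length_cube_le:
  "(\<integral>\<^sup>+y. indicator {0<..<peak} y * ennreal (level_length y ^ 3) \<partial>lborel)
    \<le> (\<integral>\<^sup>+y. indicator {0<..<peak} y * ennreal (profile s peak y ^ 3) \<partial>lborel)"
proof (rule nn_integral_cube_le_single_crossing)
  show "(\<lambda>y. profile s peak y) \<in> borel_measurable lborel"
    unfolding profile_def by measurable
  show "(\<integral>\<^sup>+y. indicator {0<..<peak} y * ennreal (level_length y) \<partial>lborel)
      = (\<integral>\<^sup>+y. indicator {0<..<peak} y * ennreal (profile s peak y) \<partial>lborel)"
    by (simp add: nn_integral_level_length nn_integral_profile)
  show "(\<integral>\<^sup>+y. indicator {0<..<peak} y * ennreal (profile s peak y) \<partial>lborel) \<noteq> \<infinity>"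
    by (simp add: nn_integral_profile)
  show "level_length y \<le> level_length y'"
    if "y \<in> {0<..<peak}" "y' \<in> {0<..<peak}" "profile s peak y \<le> level_length y"
      "level_length y' < profile s peak y'" for y y'
  proof (cases "y' < y")
    case True
    then show ?thesis using that by (intro level_length_antimono) auto
  next
    case False
    then have "y < y' \<or> y = y'" by auto
    then show ?thesis
      using that profile_le_level_length_upward[of y y'] by auto
  qed
qed (use level_length_nonneg profile_pos[OF s_gt s_neg] in \<open>auto simp: less_imp_le\<close>)

lemma nn_integral_square_dist_center_bound:
  assumes "-1/3 < s"
  shows "(\<integral>\<^sup>+x. ennreal (f x * (x - center)^2) \<partial>lborel)
    \<le> ennreal (2 * (1 + s)^2 / ((1 + 2 * s) * (1 + 3 * s)) / peak^2)"
proof -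
  have "(\<integral>\<^sup>+x. ennreal (f x * (x - center)^2) \<partial>lborel)
      \<le> (\<integral>\<^sup>+y. indicator {0<..<peak} y * ennreal (level_length y ^ 3 / 3) \<partial>lborel)"
    using nn_integral_square_dist_center_le f_nonneg by (simp add: ennreal_mult)
  also have "\<dots> = (\<integral>\<^sup>+y. ennreal (1/3) * (indicator {0<..<peak} y * ennreal (level_length y ^ 3)) \<partial>lborel)"
  proof (rule nn_integral_cong)
    fix y :: real
    have "ennreal (level_length y ^ 3 / 3) = ennreal (1/3) * ennreal (level_length y ^ 3)"
      using level_length_nonneg[of y] by (simp add: ennreal_mult[symmetric])
    then show "indicator {0<..<peak} y * ennreal (level_length y ^ 3 / 3)
        = ennreal (1/3) * (indicator {0<..<peak} y * ennreal (level_length y ^ 3))"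
      by (simp add: ac_simps)
  qed
  also have "\<dots> = ennreal (1/3) * (\<integral>\<^sup>+y. indicator {0<..<peak} y * ennreal (level_length y ^ 3) \<partial>lborel)"
    by (rule nn_integral_cmult) measurable
  also have "\<dots> \<le> ennreal (1/3) * ennreal (6 * (1 + s)^2 / ((1 + 2 * s) * (1 + 3 * s) * peak^2))"
    using nn_integral_level_length_cube_le nn_integral_profile_cube[OF assms] by (simp add: mult_left_mono)
  also have "\<dots> = ennreal (2 * (1 + s)^2 / ((1 + 2 * s) * (1 + 3 * s)) / peak^2)"
    using assms by (simp add: ennreal_mult[symmetric])
  finally show ?thesis .
qed

end

section \<open>Variance bounds\<close>

lemma distributed_density_nn_integral:
  fixes Z :: "'a \<Rightarrow> real" and f g :: "real \<Rightarrow> real"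
  assumes "prob_space M" and f_nonneg: "\<And>x. 0 \<le> f x"
    and Z: "distributed M lborel Z (\<lambda>x. ennreal (f x))"
  shows "f \<in> borel_measurable borel" and "(\<integral>\<^sup>+x. ennreal (f x) \<partial>lborel) = 1"
    and "g \<in> borel_measurable borel \<Longrightarrow> (\<And>x. 0 \<le> g x) \<Longrightarrow>
      (\<integral>\<^sup>+\<omega>. ennreal (g (Z \<omega>)) \<partial>M) = (\<integral>\<^sup>+x. ennreal (f x * g x) \<partial>lborel)"
proof -
  show "f \<in> borel_measurable borel"
    using distributed_borel_measurable[OF Z] f_nonneg by simp
  have "(\<integral>\<^sup>+x. ennreal (f x) * 1 \<partial>lborel) = (\<integral>\<^sup>+\<omega>. 1 \<partial>M)"
    by (rule distributed_nn_integral[OF Z]) simp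
  then show "(\<integral>\<^sup>+x. ennreal (f x) \<partial>lborel) = 1"
    using prob_space.emeasure_space_1[OF \<open>prob_space M\<close>] by simp
  assume "g \<in> borel_measurable borel" and g_nonneg: "\<And>x. 0 \<le> g x"
  then have "(\<integral>\<^sup>+x. ennreal (f x) * ennreal (g x) \<partial>lborel) = (\<integral>\<^sup>+\<omega>. ennreal (g (Z \<omega>)) \<partial>M)"
    by (intro distributed_nn_integral[OF Z]) simp
  then show "(\<integral>\<^sup>+\<omega>. ennreal (g (Z \<omega>)) \<partial>M) = (\<integral>\<^sup>+x. ennreal (f x * g x) \<partial>lborel)"
    using f_nonneg g_nonneg by (simp add: ennreal_mult)
qed

lemma (in prob_space) variance_le_square_dist_moment:
  fixes Z :: "'a \<Rightarrow> real"
  assumes [measurable]: "Z \<in> borel_measurable M" and Z2: "integrable M (\<lambda>\<omega>. (Z \<omega>)\<^sup>2)"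
  shows "integrable M (\<lambda>\<omega>. (Z \<omega> - c)\<^sup>2)"
    and "variance Z \<le> expectation (\<lambda>\<omega>. (Z \<omega> - c)\<^sup>2)"
proof -
  have Z: "integrable M Z"
    using square_integrable_imp_integrable[OF _ Z2] by simp
  have expand: "(\<lambda>\<omega>. (Z \<omega> - d)\<^sup>2) = (\<lambda>\<omega>. (Z \<omega>)\<^sup>2 - 2 * d * Z \<omega> + d\<^sup>2)" for d
    by (simp add: fun_eq_iff power2_eq_square algebra_simps)
  show "integrable M (\<lambda>\<omega>. (Z \<omega> - c)\<^sup>2)"
    unfolding expand using Z2 Z by simp
  have "expectation (\<lambda>\<omega>. (Z \<omega> - c)\<^sup>2) = expectation (\<lambda>\<omega>. (Z \<omega>)\<^sup>2) - 2 * c * expectation Z + c\<^sup>2"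
    unfolding expand using Z2 Z by (simp add: prob_space)
  moreover have "variance Z = expectation (\<lambda>\<omega>. (Z \<omega>)\<^sup>2) - (expectation Z)\<^sup>2"
    using Z Z2 by (rule variance_eq)
  moreover have "0 \<le> (expectation Z - c)\<^sup>2" by simp
  ultimately show "variance Z \<le> expectation (\<lambda>\<omega>. (Z \<omega> - c)\<^sup>2)"
    by (simp add: power2_eq_square algebra_simps)
qed

lemma s_concave_if_log_concave:
  assumes "s_concave 0 f" and "s < 0"
  shows "s_concave s f"
  unfolding s_concave_def
proof (intro conjI allI impI)
  show f_nonneg: "0 \<le> f x" for x
    using assms(1) by (simp add: s_concave_def)
  fix x y \<theta> :: real
  assume \<theta>: "0 < \<theta> \<and> \<theta> < 1"
  have log_concave: "s_mean 0 \<theta> (f x) (f y) \<le> f (\<theta> * x + (1 - \<theta>) * y)"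
    using assms(1) \<theta> by (simp add: s_concave_def)
  show "s_mean s \<theta> (f x) (f y) \<le> f (\<theta> * x + (1 - \<theta>) * y)"
  proof (cases "f x = 0 \<or> f y = 0")
    case True
    then show ?thesis using f_nonneg \<open>s < 0\<close> by (simp add: s_mean_def)
  next
    case False
    then have pos: "0 < f x" "0 < f y" using f_nonneg by (auto simp: order_le_less)
    define G where "G = f x powr \<theta> * f y powr (1 - \<theta>)"
    have "0 < G" using pos by (simp add: G_def)
    have "exp (\<theta> * ln (f x powr s) + (1 - \<theta>) * ln (f y powr s))
        \<le> \<theta> * exp (ln (f x powr s)) + (1 - \<theta>) * exp (ln (f y powr s))"
      using convex_onD[OF exp_convex, of "1 - \<theta>" "ln (f x powr s)" "ln (f y powr s)"] \<theta> by simp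
    then have "G powr s \<le> \<theta> * f x powr s + (1 - \<theta>) * f y powr s"
      using pos by (simp add: G_def powr_def exp_add ln_mult algebra_simps)
    then have "(\<theta> * f x powr s + (1 - \<theta>) * f y powr s) powr (1 / s) \<le> (G powr s) powr (1 / s)"
      using \<open>0 < G\<close> \<open>s < 0\<close> by (intro powr_mono2') auto
    also have "(G powr s) powr (1 / s) = G"
      using \<open>0 < G\<close> \<open>s < 0\<close> by (simp add: powr_powr)
    finally show ?thesis
      using log_concave False \<open>s < 0\<close> by (simp add: s_mean_def G_def)
  qed
qed

lemma (in prob_space) variance_esssup_lower_bound:
  fixes Z :: "'a \<Rightarrow> real" and f :: "real \<Rightarrow> real"
  assumes f_nonneg: "\<And>x. 0 \<le> f x" and Z: "distributed M lborel Z (\<lambda>x. ennreal (f x))"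
    and Z2: "integrable M (\<lambda>\<omega>. (Z \<omega>)\<^sup>2)"
  shows "ereal (1/12) \<le> ereal (variance Z) * (esssup lborel (\<lambda>x. ereal (f x)))\<^sup>2"
proof -
  note density = distributed_density_nn_integral[OF prob_space_axioms f_nonneg Z]
  have [measurable]: "Z \<in> borel_measurable M"
    using distributed_measurable[OF Z] by simp
  note square_dist = variance_le_square_dist_moment[OF _ Z2, of "expectation Z"]
  have "(\<integral>\<^sup>+x. ennreal (f x * (x - expectation Z)\<^sup>2) \<partial>lborel) = ennreal (variance Z)"
    using density(3)[of "\<lambda>x. (x - expectation Z)\<^sup>2"] nn_integral_eq_integral[OF square_dist(1)] by simp
  then show ?thesis
    by (rule second_moment_esssup_lower_bound[OF f_nonneg density(1,2) _ variance_positive])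
qed

lemma (in prob_space) variance_esssup_upper_bound_neg:
  fixes Z :: "'a \<Rightarrow> real" and f :: "real \<Rightarrow> real"
  assumes s: "-1/3 < s" "s < 0" and "s_concave s f" and Z: "distributed M lborel Z (\<lambda>x. ennreal (f x))"
  shows "integrable M (\<lambda>\<omega>. (Z \<omega>)\<^sup>2)"
    and "ereal (variance Z) * (esssup lborel (\<lambda>x. ereal (f x)))\<^sup>2
      \<le> ereal (2 * (1 + s)^2 / ((1 + 2 * s) * (1 + 3 * s)))"
proof -
  have f_nonneg: "\<And>x. 0 \<le> f x"
    using \<open>s_concave s f\<close> by (simp add: s_concave_def)
  note density = distributed_density_nn_integral[OF prob_space_axioms f_nonneg Z]
  interpret s_concave_density s f
    using s \<open>s_concave s f\<close> density(1,2) by unfold_locales auto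
  have [measurable]: "Z \<in> borel_measurable M"
    using distributed_measurable[OF Z] by simp
  define C where "C = 2 * (1 + s)^2 / ((1 + 2 * s) * (1 + 3 * s))"
  have moment: "(\<integral>\<^sup>+\<omega>. ennreal ((Z \<omega> - center)\<^sup>2) \<partial>M) \<le> ennreal (C / peak\<^sup>2)"
    using density(3)[of "\<lambda>x. (x - center)\<^sup>2"] nn_integral_square_dist_center_bound[OF s(1)] by (simp add: C_def)
  then have centered: "integrable M (\<lambda>\<omega>. (Z \<omega> - center)\<^sup>2)"
    by (intro integrableI_bounded) (auto intro: le_less_trans[OF _ ennreal_less_top])
  have "integrable M (\<lambda>\<omega>. Z \<omega> - center)"
    by (rule square_integrable_imp_integrable[OF _ centered]) measurable
  then have "integrable M (\<lambda>\<omega>. (Z \<omega> - center)\<^sup>2 + 2 * center * (Z \<omega> - center) + center\<^sup>2)"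
    using centered by (intro Bochner_Integration.integrable_add integrable_mult_right) simp_all
  moreover have "(Z \<omega> - center)\<^sup>2 + 2 * center * (Z \<omega> - center) + center\<^sup>2 = (Z \<omega>)\<^sup>2" for \<omega>
    by (simp add: power2_eq_square algebra_simps)
  ultimately show Z2: "integrable M (\<lambda>\<omega>. (Z \<omega>)\<^sup>2)"
    by simp
  have "variance Z \<le> expectation (\<lambda>\<omega>. (Z \<omega> - center)\<^sup>2)"
    using variance_le_square_dist_moment(2)[OF _ Z2] by simp
  also have "\<dots> \<le> C / peak\<^sup>2"
    using moment nn_integral_eq_integral[OF centered] s by (simp add: C_def ennreal_le_iff)
  finally have "variance Z * peak\<^sup>2 \<le> C"
    using peak_pos by (simp add: pos_le_divide_eq)
  then show "ereal (variance Z) * (esssup lborel (\<lambda>x. ereal (f x)))\<^sup>2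
      \<le> ereal (2 * (1 + s)^2 / ((1 + 2 * s) * (1 + 3 * s)))"
    using ess_max_eq_peak unfolding ess_max_def C_def by (simp add: power2_eq_square)
qed

lemma (in prob_space) variance_esssup_upper_bound:
  fixes Z :: "'a \<Rightarrow> real" and f :: "real \<Rightarrow> real"
  assumes s: "-1/3 < s" "s \<le> 0" and "s_concave s f" and Z: "distributed M lborel Z (\<lambda>x. ennreal (f x))"
  shows "integrable M (\<lambda>\<omega>. (Z \<omega>)\<^sup>2)"
    and "ereal (variance Z) * (esssup lborel (\<lambda>x. ereal (f x)))\<^sup>2
      \<le> ereal (4 * (1 + s) ^ 3 / ((1 + 3 * s) * (1 + 2 * s)\<^sup>2))"
proof -
  \<comment> \<open>A log-concave density is \<open>t\<close>-concave for every \<open>t < 0\<close>; \<open>t = -1/10\<close> already gives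
    the constant \<open>81/28 < 4\<close>.\<close>
  define t where "t = (if s = 0 then - 1 / 10 else s)"
  have t: "-1/3 < t" "t < 0" "s_concave t f"
    using s \<open>s_concave s f\<close> s_concave_if_log_concave[of f "- 1 / 10"] by (auto simp: t_def)
  note bound = variance_esssup_upper_bound_neg[OF t Z]
  show "integrable M (\<lambda>\<omega>. (Z \<omega>)\<^sup>2)"
    using bound(1) .
  have "2 * (1 + t)^2 / ((1 + 2 * t) * (1 + 3 * t)) \<le> 4 * (1 + s) ^ 3 / ((1 + 3 * s) * (1 + 2 * s)\<^sup>2)"
  proof (cases "s = 0")
    case False
    then have "0 < 1 + 2 * s" "0 < 1 + 3 * s" "1 + 2 * s \<le> 2 * (1 + s)"
      using s by auto
    then show ?thesis
      using False by (simp add: t_def divide_simps power2_eq_square power3_eq_cube mult_left_mono)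
  qed (simp add: t_def power2_eq_square)
  then show "ereal (variance Z) * (esssup lborel (\<lambda>x. ereal (f x)))\<^sup>2
      \<le> ereal (4 * (1 + s) ^ 3 / ((1 + 3 * s) * (1 + 2 * s)\<^sup>2))"
    using bound(2) by (meson ereal_less_eq(3) order.trans)
qed

theorem proposition5:
  shows
  "(\<forall>(M :: 'a measure) (Z :: 'a \<Rightarrow> real) (f :: real \<Rightarrow> real).
      prob_space M \<longrightarrow> (\<forall>x. f x \<ge> 0) \<longrightarrow> distributed M lborel Z (\<lambda>x. ennreal (f x)) \<longrightarrow>
      integrable M (\<lambda>\<omega>. (Z \<omega>)\<^sup>2) \<longrightarrow>
      ereal (1 / 12) \<le>
        ereal (integral\<^sup>L M (\<lambda>\<omega>. (Z \<omega> - integral\<^sup>L M Z)\<^sup>2)) * (esssup lborel (\<lambda>x. ereal (f x)))\<^sup>2)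
   \<and>
   (\<forall>(M :: 'a measure) (Z :: 'a \<Rightarrow> real) (f :: real \<Rightarrow> real) (s :: real).
      prob_space M \<longrightarrow> -1/3 < s \<longrightarrow> s \<le> 0 \<longrightarrow> s_concave s f \<longrightarrow>
      distributed M lborel Z (\<lambda>x. ennreal (f x)) \<longrightarrow>
      integrable M (\<lambda>\<omega>. (Z \<omega>)\<^sup>2) \<and>
      ereal (1 / 12) \<le>
        ereal (integral\<^sup>L M (\<lambda>\<omega>. (Z \<omega> - integral\<^sup>L M Z)\<^sup>2)) * (esssup lborel (\<lambda>x. ereal (f x)))\<^sup>2 \<and>
      ereal (integral\<^sup>L M (\<lambda>\<omega>. (Z \<omega> - integral\<^sup>L M Z)\<^sup>2)) * (esssup lborel (\<lambda>x. ereal (f x)))\<^sup>2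
        \<le> ereal (4 * (1 + s) ^ 3 / ((1 + 3 * s) * (1 + 2 * s)\<^sup>2)))"
proof (intro conjI allI impI)
  fix M :: "'a measure" and Z :: "'a \<Rightarrow> real" and f :: "real \<Rightarrow> real"
  assume "prob_space M" "\<forall>x. f x \<ge> 0" "distributed M lborel Z (\<lambda>x. ennreal (f x))"
    "integrable M (\<lambda>\<omega>. (Z \<omega>)\<^sup>2)"
  then show "ereal (1 / 12) \<le>
      ereal (integral\<^sup>L M (\<lambda>\<omega>. (Z \<omega> - integral\<^sup>L M Z)\<^sup>2)) * (esssup lborel (\<lambda>x. ereal (f x)))\<^sup>2"
    using prob_space.variance_esssup_lower_bound by blast
next
  fix M :: "'a measure" and Z :: "'a \<Rightarrow> real" and f :: "real \<Rightarrow> real" and s :: real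
  assume M: "prob_space M" and s: "-1/3 < s" "s \<le> 0" and f: "s_concave s f"
    and Z: "distributed M lborel Z (\<lambda>x. ennreal (f x))"
  note upper = prob_space.variance_esssup_upper_bound[OF M s f Z]
  show "integrable M (\<lambda>\<omega>. (Z \<omega>)\<^sup>2)"
    using upper(1) .
  show "ereal (1 / 12) \<le>
      ereal (integral\<^sup>L M (\<lambda>\<omega>. (Z \<omega> - integral\<^sup>L M Z)\<^sup>2)) * (esssup lborel (\<lambda>x. ereal (f x)))\<^sup>2"
    using prob_space.variance_esssup_lower_bound[OF M _ Z upper(1)] f by (simp add: s_concave_def)
  show "ereal (integral\<^sup>L M (\<lambda>\<omega>. (Z \<omega> - integral\<^sup>L M Z)\<^sup>2)) * (esssup lborel (\<lambda>x. ereal (f x)))\<^sup>2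
      \<le> ereal (4 * (1 + s) ^ 3 / ((1 + 3 * s) * (1 + 2 * s)\<^sup>2))"
    using upper(2) .
qed

end
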